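(* Let $\delta\in(0,1)$, $D\ge1$ and $q\ge2$ be constants, let $q_c$ be an integer with $1\le q_c\le q$, and let $\alpha=\frac{\delta}{100D\log q}$. Define $g_\alpha(k)=\sum_{i=0}^{k-1}q_c^{\alpha i}$. Let $\mathcal F$ be any family of probability distributions $\nu$, each supported on subsets of a set $U_\nu$ with $|U_\nu|\le D$ and satisfying $\mathbb E_{S\sim\nu}[|S|]\le1-\delta$. Then $$\beta(\alpha):=\sup_{\nu\in\mathcal F}\sum_{S}\nu(S)^{1-\alpha}g_\alpha(|S|)<1.$$
   Context: $\log$ is the natural logarithm. (In the paper, $\mathcal F$ is the set of distributions $\nu$ of the set $S$ sampled in the invocations of an abstract marginal sampler whose continuation sets have size at most $q_c$, under the hypotheses $\mathbb E_\nu|S|\le1-\delta$ and $|\bigcup_{S\in\mathrm{supp}\nu}S|\le D$.) *)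

theory Defs
  imports "HOL-Probability.Probability"
begin

definition g_alpha :: "nat \<Rightarrow> real \<Rightarrow> nat \<Rightarrow> real" where
  "g_alpha qc \<alpha> k = (\<Sum>i<k. real qc powr (\<alpha> * real i))"

definition beta_sum :: "nat \<Rightarrow> real \<Rightarrow> 'a set pmf \<Rightarrow> real" where
  "beta_sum qc \<alpha> \<nu> = (\<Sum>S\<in>set_pmf \<nu>. pmf \<nu> S powr (1 - \<alpha>) * g_alpha qc \<alpha> (card S))"

end

theory Submission
  imports Defs
begin

text \<open>
  By weighted AM-GM, \<nu>(S)^(1-\<alpha>) \<le> e^\<epsilon> \<nu>(S) + \<alpha> exp(-\<epsilon>(1-\<alpha>)/\<alpha>) for every \<epsilon>, and
  g_\<alpha>(|S|) \<le> |S| q_c^(\<alpha>D).  The first term contributes at most e^\<epsilon> q_c^(\<alpha>D) E|S|,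
  which is at most e^\<epsilon> q_c^(\<alpha>D) (1 - \<delta>).  The second is a constant summed over at most
  2^D sets of size at most D; for \<epsilon> = \<delta>/10 and \<alpha> = \<delta>/(100 D ln q) the constant is at most
  \<alpha> 4^(-D), so this part contributes at most \<alpha> q_c^(\<alpha>D).  As q_c^(\<alpha>D) \<le> e^(\<delta>/100) and
  \<alpha> \<le> \<delta>/50, every \<nu> gives at most e^(\<delta>/100) (e^(\<delta>/10) (1 - \<delta>) + \<delta>/50), a constant below 1.
\<close>

lemma powr_one_minus_le_exp_Young:
  fixes p a \<epsilon> :: real
  assumes "0 < p" "0 < a" "a < 1"
  shows "p powr (1 - a) \<le> exp \<epsilon> * p + a * exp (- \<epsilon> * (1 - a) / a)"
proof -
  have "(exp \<epsilon> * p) powr (1 - a) * exp (- \<epsilon> * (1 - a) / a) powr a = p powr (1 - a)"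
  proof -
    have "a * (- \<epsilon> * (1 - a) / a) = - ((1 - a) * \<epsilon>)"
      using assms by simp
    then show ?thesis
      using assms by (simp add: powr_def ln_mult algebra_simps flip: exp_add)
  qed
  moreover have "(exp \<epsilon> * p) powr (1 - a) * exp (- \<epsilon> * (1 - a) / a) powr a
      \<le> (1 - a) * (exp \<epsilon> * p) + a * exp (- \<epsilon> * (1 - a) / a)"
    by (rule Youngs_inequality_0) (use assms in auto)
  moreover have "(1 - a) * (exp \<epsilon> * p) \<le> exp \<epsilon> * p"
    using assms by (simp add: mult_left_le_one_le)
  ultimately show ?thesis by linarith
qed

lemma g_alpha_le:
  assumes "1 \<le> qc" "0 \<le> \<alpha>" "k \<le> m"
  shows "g_alpha qc \<alpha> k \<le> real k * real qc powr (\<alpha> * real m)"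
proof -
  have "g_alpha qc \<alpha> k \<le> (\<Sum>i<k. real qc powr (\<alpha> * real m))"
    unfolding g_alpha_def using assms by (intro sum_mono powr_mono mult_left_mono) auto
  then show ?thesis by simp
qed

lemma real_mult_two_pow_le_exp:
  assumes "real N * ln 4 \<le> x"
  shows "real N * 2 ^ N \<le> exp x"
proof -
  have "real N * 2 ^ N \<le> 2 ^ N * 2 ^ N"
    using less_exp[of N] by (intro mult_right_mono) (simp_all flip: of_nat_less_iff)
  also have "\<dots> = exp (real N * ln 4)"
    by (simp add: exp_of_nat_mult flip: power_mult_distrib)
  also have "\<dots> \<le> exp x"
    using assms by simp
  finally show ?thesis .
qed

lemma exp_le_one_plus_double:
  fixes x :: real
  assumes "0 \<le> x" "x \<le> 1"
  shows "exp x \<le> 1 + 2 * x"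
proof -
  have "x\<^sup>2 \<le> x"
    using assms by (simp add: power2_eq_square mult_left_le_one_le)
  then show ?thesis
    using exp_bound[OF assms] by linarith
qed

lemma beta_sum_le:
  fixes \<nu> :: "'a set pmf"
  assumes U: "finite U" "set_pmf \<nu> \<subseteq> Pow U" and \<alpha>: "0 < \<alpha>" "\<alpha> < 1" and "1 \<le> qc"
  defines "N \<equiv> card U"
  shows "beta_sum qc \<alpha> \<nu> \<le> real qc powr (\<alpha> * N) *
    (exp \<epsilon> * measure_pmf.expectation \<nu> (\<lambda>S. real (card S))
     + \<alpha> * exp (- \<epsilon> * (1 - \<alpha>) / \<alpha>) * (real N * 2 ^ N))"
proof -
  define M where "M = real qc powr (\<alpha> * N)"
  define E where "E = exp (- \<epsilon> * (1 - \<alpha>) / \<alpha>)"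
  have fin: "finite (set_pmf \<nu>)"
    using U finite_subset by blast
  have card_le: "card S \<le> N" if "S \<in> set_pmf \<nu>" for S
    using U that unfolding N_def by (auto intro: card_mono)
  have "pmf \<nu> S powr (1 - \<alpha>) * g_alpha qc \<alpha> (card S)
      \<le> M * (exp \<epsilon> * (real (card S) * pmf \<nu> S) + \<alpha> * E * real (card S))"
    if S: "S \<in> set_pmf \<nu>" for S
  proof -
    have "pmf \<nu> S powr (1 - \<alpha>) \<le> exp \<epsilon> * pmf \<nu> S + \<alpha> * E"
      unfolding E_def using S \<alpha>
      by (intro powr_one_minus_le_exp_Young) (simp_all add: pmf_positive)
    moreover have "g_alpha qc \<alpha> (card S) \<le> real (card S) * M"
      unfolding M_def using card_le[OF S] \<alpha> \<open>1 \<le> qc\<close> by (intro g_alpha_le) auto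
    moreover have "0 \<le> g_alpha qc \<alpha> (card S)"
      unfolding g_alpha_def by (intro sum_nonneg) auto
    moreover have "0 \<le> exp \<epsilon> * pmf \<nu> S + \<alpha> * E"
      using \<alpha> by (simp add: E_def)
    ultimately have "pmf \<nu> S powr (1 - \<alpha>) * g_alpha qc \<alpha> (card S)
        \<le> (exp \<epsilon> * pmf \<nu> S + \<alpha> * E) * (real (card S) * M)"
      by (intro mult_mono) auto
    then show ?thesis
      by (simp add: algebra_simps)
  qed
  then have "beta_sum qc \<alpha> \<nu>
      \<le> (\<Sum>S\<in>set_pmf \<nu>. M * (exp \<epsilon> * (real (card S) * pmf \<nu> S) + \<alpha> * E * real (card S)))"
    unfolding beta_sum_def by (rule sum_mono)
  also have "\<dots> = M * (exp \<epsilon> * (\<Sum>S\<in>set_pmf \<nu>. real (card S) * pmf \<nu> S)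
      + \<alpha> * E * (\<Sum>S\<in>set_pmf \<nu>. real (card S)))"
    by (simp add: sum.distrib sum_distrib_left distrib_left)
  also have "(\<Sum>S\<in>set_pmf \<nu>. real (card S) * pmf \<nu> S)
      = measure_pmf.expectation \<nu> (\<lambda>S. real (card S))"
    by (rule integral_measure_pmf_real[symmetric]) (use fin in auto)
  also have "(\<Sum>S\<in>set_pmf \<nu>. real (card S)) \<le> real N * 2 ^ N"
  proof -
    have "(\<Sum>S\<in>set_pmf \<nu>. real (card S)) \<le> real N * card (set_pmf \<nu>)"
      using sum_bounded_above[of "set_pmf \<nu>" "\<lambda>S. real (card S)" "real N"] card_le
      by (simp add: mult.commute)
    also have "card (set_pmf \<nu>) \<le> card (Pow U)"
      using U by (intro card_mono) auto
    then have "real N * card (set_pmf \<nu>) \<le> real N * 2 ^ N"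
      using U by (simp add: N_def card_Pow mult_left_mono)
    finally show ?thesis .
  qed
  finally show ?thesis
    unfolding M_def E_def using \<alpha> by (simp add: mult_left_mono)
qed

lemma beta_sum_le_of_expected_card_le:
  fixes \<nu> :: "'a set pmf"
  assumes \<delta>: "0 < \<delta>" "\<delta> < 1" and "D \<ge> 1" "q \<ge> 2" "1 \<le> qc" "real qc \<le> q"
    and U: "finite U" "real (card U) \<le> D" "set_pmf \<nu> \<subseteq> Pow U"
    and expectation: "measure_pmf.expectation \<nu> (\<lambda>S. real (card S)) \<le> 1 - \<delta>"
  shows "beta_sum qc (\<delta> / (100 * D * ln q)) \<nu>
    \<le> exp (\<delta> / 100) * (exp (\<delta> / 10) * (1 - \<delta>) + \<delta> / 50)"
proof -
  define \<alpha> where "\<alpha> = \<delta> / (100 * D * ln q)"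
  define N where "N = card U"
  have ln_2_q: "ln 2 \<le> ln q"
    using \<open>q \<ge> 2\<close> by simp
  then have ln_q: "1 / 2 \<le> ln q"
    using ln2_ge_two_thirds by linarith
  have \<alpha>_D: "\<alpha> * D * ln q = \<delta> / 100"
    unfolding \<alpha>_def using \<open>D \<ge> 1\<close> ln_q by (simp add: field_simps)
  have "50 \<le> 100 * D * ln q"
    using mult_mono[of 1 D "1/2" "ln q"] \<open>D \<ge> 1\<close> ln_q by linarith
  then have \<alpha>: "0 < \<alpha>" "\<alpha> \<le> \<delta> / 50"
    unfolding \<alpha>_def using \<delta> by (simp, intro divide_left_mono) auto
  have M: "real qc powr (\<alpha> * N) \<le> exp (\<delta> / 100)"
  proof -
    have "\<alpha> * N * ln qc \<le> \<alpha> * D * ln q"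
      using U \<alpha> \<open>1 \<le> qc\<close> \<open>real qc \<le> q\<close> unfolding N_def by (intro mult_mono) auto
    then show ?thesis
      using \<open>1 \<le> qc\<close> \<alpha>_D by (simp add: powr_def)
  qed
  have E: "exp (- (\<delta> / 10) * (1 - \<alpha>) / \<alpha>) * (real N * 2 ^ N) \<le> 1"
  proof -
    have "ln 4 = 2 * ln (2 :: real)"
      using ln_mult[of 2 2] by simp
    also have "\<dots> \<le> 5 * ln q"
      using ln_2_q ln_q by simp
    finally have "real N * ln 4 \<le> D * (5 * ln q)"
      using U unfolding N_def by (intro mult_mono) auto
    also have "\<dots> = 5 * (D * ln q)"
      by simp
    also have "\<dots> \<le> 10 * (1 - \<alpha>) * (D * ln q)"
      using \<alpha> \<delta> \<open>D \<ge> 1\<close> ln_q by (intro mult_right_mono) auto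
    also have "\<dots> = (\<delta> / 10) * (1 - \<alpha>) / \<alpha>"
      unfolding \<alpha>_def using \<delta> \<open>D \<ge> 1\<close> ln_q by (simp add: field_simps)
    finally show ?thesis
      using real_mult_two_pow_le_exp by (simp add: exp_minus field_simps)
  qed
  have "beta_sum qc \<alpha> \<nu> \<le> real qc powr (\<alpha> * N) *
    (exp (\<delta> / 10) * measure_pmf.expectation \<nu> (\<lambda>S. real (card S))
     + \<alpha> * exp (- (\<delta> / 10) * (1 - \<alpha>) / \<alpha>) * (real N * 2 ^ N))"
    unfolding N_def using \<alpha> \<delta> by (intro beta_sum_le U(1,3) \<open>1 \<le> qc\<close>) auto
  also have "\<dots> \<le> exp (\<delta> / 100) * (exp (\<delta> / 10) * (1 - \<delta>) + \<alpha>)"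
    using M E expectation \<alpha> \<delta> mult_left_mono[OF E, of \<alpha>]
    by (intro mult_mono add_mono) (auto simp: mult.assoc)
  also have "\<dots> \<le> exp (\<delta> / 100) * (exp (\<delta> / 10) * (1 - \<delta>) + \<delta> / 50)"
    using \<alpha> by simp
  finally show ?thesis
    unfolding \<alpha>_def .
qed

lemma beta_sum_bound_lt_one:
  fixes \<delta> :: real
  assumes "0 < \<delta>" "\<delta> < 1"
  shows "exp (\<delta> / 100) * (exp (\<delta> / 10) * (1 - \<delta>) + \<delta> / 50) < 1"
proof -
  have "exp (\<delta> / 10) * (1 - \<delta>) \<le> (1 + \<delta> / 5) * (1 - \<delta>)"
    using exp_le_one_plus_double[of "\<delta> / 10"] assms by (intro mult_right_mono) auto
  also have "\<dots> \<le> 1 - 4 * \<delta> / 5"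
    by (simp add: algebra_simps)
  finally have "exp (\<delta> / 100) * (exp (\<delta> / 10) * (1 - \<delta>) + \<delta> / 50)
      \<le> (1 + \<delta> / 50) * (1 - 39 * \<delta> / 50)"
    using exp_le_one_plus_double[of "\<delta> / 100"] assms by (intro mult_mono) auto
  also have "\<dots> < 1"
    using assms by (simp add: algebra_simps add_pos_nonneg)
  finally show ?thesis .
qed

theorem lemma4p5:
  fixes \<delta> D q :: real and qc :: nat and F :: "'a set pmf set"
  assumes "0 < \<delta>" "\<delta> < 1" "D \<ge> 1" "q \<ge> 2" "1 \<le> qc" "real qc \<le> q"
    and "F \<noteq> {}"
    and "\<And>\<nu>. \<nu> \<in> F \<Longrightarrow> \<exists>U. finite U \<and> real (card U) \<le> D \<and> set_pmf \<nu> \<subseteq> Pow U"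
    and "\<And>\<nu>. \<nu> \<in> F \<Longrightarrow> measure_pmf.expectation \<nu> (\<lambda>S. real (card S)) \<le> 1 - \<delta>"
  shows "(SUP \<nu>\<in>F. beta_sum qc (\<delta> / (100 * D * ln q)) \<nu>) < 1"
proof -
  have "beta_sum qc (\<delta> / (100 * D * ln q)) \<nu>
      \<le> exp (\<delta> / 100) * (exp (\<delta> / 10) * (1 - \<delta>) + \<delta> / 50)" if "\<nu> \<in> F" for \<nu>
    using assms(1-6) assms(8,9)[OF that] by (metis beta_sum_le_of_expected_card_le)
  then have "(SUP \<nu>\<in>F. beta_sum qc (\<delta> / (100 * D * ln q)) \<nu>)
      \<le> exp (\<delta> / 100) * (exp (\<delta> / 10) * (1 - \<delta>) + \<delta> / 50)"
    by (rule cSUP_least[OF \<open>F \<noteq> {}\<close>])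
  also have "\<dots> < 1"
    using beta_sum_bound_lt_one assms(1,2) .
  finally show ?thesis .
qed

end
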